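(* For every $T\ge T_0[\varphi_1]$ and $U\in(0,T/\ln T]$, with $\mathcal{J}(T,U)=[T,T+U]$ and $\mathring{\mathcal{J}}(T,U)=[\varphi_1^{-1}(T),\varphi_1^{-1}(T+U)]$, there exists $\xi\in(\varphi_1^{-1}(T),\varphi_1^{-1}(T+U))$ with $\tilde Z(\xi)\ne0$ and $$\tilde Z^2(\xi)=\frac{|\mathcal{J}(T,U)|}{|\mathring{\mathcal{J}}(T,U)|}.$$
   Context: Let $Z(t)=e^{i\vartheta(t)}\zeta(\tfrac12+it)$ with $\vartheta(t)=-\frac t2\ln\pi+\operatorname{Im}\ln\Gamma(\frac14+\frac{it}{2})$. Let $\mu(y)$ be continuous with $\mu(y)\ge 7y\ln y$ and $\Phi(\varphi)=\int_0^{\mu[\varphi]}Z^2(t)e^{-2t/\varphi}\,dt$. A Jacob's ladder is a continuous solution $\varphi(T)$, $T\ge T_0$, of $\Phi(\varphi(T))=\int_0^T Z^2(t)\,dt$ (from the author's earlier work). Put $\varphi_1=\frac12\varphi$ (defined for $T\ge T_0[\varphi_1]$) and $\tilde Z^2(t)=\frac{Z^2(t)}{2\Phi'(\varphi(t))}$, so $\varphi_1'=\tilde Z^2$. $\varphi_1$ is increasing and $\varphi_1^{-1}(x)$ denotes the unique $t$ with $\varphi_1(t)=x$; $|I|$ denotes the length of a segment $I$. *)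

theory Defs
  imports "HOL-Analysis.Analysis"
begin

text \<open>Riemann zeta on Re s > 0, s not a pole of the factor, via the Dirichlet eta series:
  zeta s = eta s / (1 - 2 powr (1 - s)), eta s = sum over n of (-1)^(n-1) n^(-s).
  On the critical line 1 - 2 powr (1 - s) is never zero.\<close>
definition dirichlet_eta :: "complex \<Rightarrow> complex" where
  "dirichlet_eta s = (\<Sum>n. (-1) ^ n / (of_nat (Suc n)) powr s)"

definition zeta_crit :: "complex \<Rightarrow> complex" where
  "zeta_crit s = dirichlet_eta s / (1 - 2 powr (1 - s))"

definition vartheta :: "real \<Rightarrow> real" where
  "vartheta t = - (t / 2) * ln pi + Im (ln_Gamma (Complex (1/4) (t/2)))"

text \<open>Hardy's Z-function (real valued; we take the real part of the expression).\<close>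
definition hardyZ :: "real \<Rightarrow> real" where
  "hardyZ t = Re (exp (\<i> * complex_of_real (vartheta t)) * zeta_crit (Complex (1/2) t))"

definition Phi :: "(real \<Rightarrow> real) \<Rightarrow> real \<Rightarrow> real" where
  "Phi \<mu> y = integral {0..\<mu> y} (\<lambda>t. (hardyZ t)\<^sup>2 * exp (- 2 * t / y))"

definition jacobs_ladder :: "(real \<Rightarrow> real) \<Rightarrow> (real \<Rightarrow> real) \<Rightarrow> real \<Rightarrow> bool" where
  "jacobs_ladder \<mu> \<phi> T0 \<longleftrightarrow> continuous_on {T0..} \<phi> \<and>
     (\<forall>T\<ge>T0. Phi \<mu> (\<phi> T) = integral {0..T} (\<lambda>t. (hardyZ t)\<^sup>2))"

definition Ztilde_sq :: "(real \<Rightarrow> real) \<Rightarrow> (real \<Rightarrow> real) \<Rightarrow> real \<Rightarrow> real" where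
  "Ztilde_sq \<mu> \<phi> t = (hardyZ t)\<^sup>2 / (2 * deriv (Phi \<mu>) (\<phi> t))"

end

theory Submission
  imports Defs
begin

text \<open>Since phi1' = Ztilde^2, the mean value theorem for phi1 on
  [phi1^-1(T), phi1^-1(T+U)] yields a point where Ztilde^2 equals the difference quotient
  U / |J'|, which is nonzero because U > 0.\<close>

lemma strict_mono_on_the_inverse:
  fixes f :: "'a::linorder \<Rightarrow> 'b::preorder"
  assumes "strict_mono_on S f" "t \<in> S"
  shows "(THE s. s \<in> S \<and> f s = f t) = t"
  using strict_mono_on_imp_inj_on[OF assms(1)] assms(2)
  by (auto intro!: the_equality dest: inj_onD)

lemma mvt_has_real_derivative_within:
  fixes f f' :: "real \<Rightarrow> real"
  assumes "a < b" "{a..b} \<subseteq> S"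
    and deriv: "\<And>t. t \<in> S \<Longrightarrow> (f has_real_derivative f' t) (at t within S)"
  shows "\<exists>\<xi>. a < \<xi> \<and> \<xi> < b \<and> f b - f a = (b - a) * f' \<xi>"
proof -
  have "(f has_derivative (*) (f' t)) (at t within {a..b})" if "a \<le> t" "t \<le> b" for t
    using has_field_derivative_subset[OF deriv assms(2)] that assms(2)
    by (auto simp: has_field_derivative_def)
  from mvt_simple[OF \<open>a < b\<close> this] show ?thesis
    by auto
qed

theorem corollary3:
  fixes \<mu> \<phi> :: "real \<Rightarrow> real" and T0 T1 :: real
  assumes mu_cont: "continuous_on {0<..} \<mu>"
    and mu_ge: "\<forall>y>0. \<mu> y \<ge> 7 * y * ln y"
    and ladder: "jacobs_ladder \<mu> \<phi> T0"
    and phi1_incr: "strict_mono_on {T0..} (\<lambda>t. \<phi> t / 2)"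
    and phi1_deriv: "\<forall>t\<ge>T0. ((\<lambda>t. \<phi> t / 2) has_real_derivative Ztilde_sq \<mu> \<phi> t) (at t within {T0..})"
    and T1_range: "\<forall>x\<ge>T1. \<exists>t\<ge>T0. \<phi> t / 2 = x"
  shows "\<forall>T\<ge>T1. \<forall>U. 0 < U \<and> U \<le> T / ln T \<longrightarrow>
    (let inv = (\<lambda>x. THE t. t \<ge> T0 \<and> \<phi> t / 2 = x);
         J = {T..T+U}; J' = {inv T .. inv (T+U)}
     in \<exists>\<xi>. inv T < \<xi> \<and> \<xi> < inv (T+U) \<and> Ztilde_sq \<mu> \<phi> \<xi> \<noteq> 0 \<and>
            Ztilde_sq \<mu> \<phi> \<xi> = measure lborel J / measure lborel J')"
proof (intro allI impI)
  fix T U :: real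
  assume "T \<ge> T1" and U: "0 < U \<and> U \<le> T / ln T"
  define \<phi>\<^sub>1 where "\<phi>\<^sub>1 = (\<lambda>t. \<phi> t / 2)"
  obtain a b where a: "a \<ge> T0" "\<phi>\<^sub>1 a = T" and b: "b \<ge> T0" "\<phi>\<^sub>1 b = T + U"
    using T1_range \<open>T \<ge> T1\<close> U unfolding \<phi>\<^sub>1_def by (meson add_increasing2 less_imp_le)
  have inv: "(THE t. t \<ge> T0 \<and> \<phi> t / 2 = \<phi>\<^sub>1 s) = s" if "s \<ge> T0" for s
    using strict_mono_on_the_inverse[OF phi1_incr, of s] that by (simp add: \<phi>\<^sub>1_def)
  have "a < b"
    using strict_mono_on_less[OF phi1_incr, of a b] a b U by (simp add: \<phi>\<^sub>1_def)
  then obtain \<xi> where \<xi>: "a < \<xi>" "\<xi> < b" "\<phi>\<^sub>1 b - \<phi>\<^sub>1 a = (b - a) * Ztilde_sq \<mu> \<phi> \<xi>"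
    using mvt_has_real_derivative_within[of a b "{T0..}" \<phi>\<^sub>1 "Ztilde_sq \<mu> \<phi>"] a phi1_deriv
    unfolding \<phi>\<^sub>1_def by auto
  then have "Ztilde_sq \<mu> \<phi> \<xi> = U / (b - a)"
    using a b by (simp add: field_simps)
  then show "let inv = (\<lambda>x. THE t. t \<ge> T0 \<and> \<phi> t / 2 = x);
         J = {T..T+U}; J' = {inv T .. inv (T+U)}
     in \<exists>\<xi>. inv T < \<xi> \<and> \<xi> < inv (T+U) \<and> Ztilde_sq \<mu> \<phi> \<xi> \<noteq> 0 \<and>
            Ztilde_sq \<mu> \<phi> \<xi> = measure lborel J / measure lborel J'"
    using \<xi>(1,2) \<open>a < b\<close> U inv[OF a(1)] inv[OF b(1)] unfolding a(2) b(2) Let_def by auto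
qed

end
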